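(* Let $G$ be a unit interval graph, i.e. the intersection graph of a finite family of closed intervals of the real line all of length one. Then $p(G)\le 2$.
   Context: A comparability graph is a graph admitting a transitive orientation. $p(G)$ is the minimum number $m$ such that $E(G)$ is the union of the edge sets of $m$ pairwise edge-disjoint comparability subgraphs of $G$. *)

theory Defs
  imports Complex_Main
begin

text \<open>Simple graphs: a vertex set V and a symmetric, irreflexive edge relation
  E \<subseteq> V \<times> V (each undirected edge uv is stored as both (u,v) and (v,u)).\<close>

definition simple_graph :: "'a set \<Rightarrow> ('a \<times> 'a) set \<Rightarrow> bool" where
  "simple_graph V E \<longleftrightarrow> E \<subseteq> V \<times> V \<and> sym E \<and> irrefl E"

definition transitive_orientation :: "('a \<times> 'a) set \<Rightarrow> ('a \<times> 'a) set \<Rightarrow> bool" where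
  "transitive_orientation F Or \<longleftrightarrow>
     Or \<subseteq> F \<and> (\<forall>u v. (u, v) \<in> F \<longrightarrow> ((u, v) \<in> Or \<longleftrightarrow> (v, u) \<notin> Or)) \<and> trans Or"

definition comparability_edges :: "('a \<times> 'a) set \<Rightarrow> bool" where
  "comparability_edges F \<longleftrightarrow> (\<exists>Or. transitive_orientation F Or)"

definition comparability_subgraph :: "'a set \<Rightarrow> ('a \<times> 'a) set \<Rightarrow> ('a \<times> 'a) set \<Rightarrow> bool" where
  "comparability_subgraph V E F \<longleftrightarrow> F \<subseteq> E \<and> sym F \<and> comparability_edges F"

definition comparability_cover :: "'a set \<Rightarrow> ('a \<times> 'a) set \<Rightarrow> nat \<Rightarrow> bool" where
  "comparability_cover V E m \<longleftrightarrow>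
     (\<exists>F :: nat \<Rightarrow> ('a \<times> 'a) set.
        (\<forall>i<m. comparability_subgraph V E (F i)) \<and>
        (\<forall>i<m. \<forall>j<m. i \<noteq> j \<longrightarrow> F i \<inter> F j = {}) \<and>
        (\<Union>i<m. F i) = E)"

definition p_number :: "'a set \<Rightarrow> ('a \<times> 'a) set \<Rightarrow> nat" where
  "p_number V E = (LEAST m. comparability_cover V E m)"

definition unit_interval_graph :: "'a set \<Rightarrow> ('a \<times> 'a) set \<Rightarrow> bool" where
  "unit_interval_graph V E \<longleftrightarrow> finite V \<and>
     (\<exists>a :: 'a \<Rightarrow> real.
        E = {(u, v). u \<in> V \<and> v \<in> V \<and> u \<noteq> v \<and>
                     {a u .. a u + 1} \<inter> {a v .. a v + 1} \<noteq> {}})"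

end

theory Submission
  imports Defs
begin

text \<open>Put the vertex with left endpoint a v into the class \<lfloor>a v\<rfloor>. Two vertices of the
  same class are always adjacent, so the edges inside the classes form a disjoint union of
  cliques, which any linear order of the vertices orients transitively. Every other edge
  joins consecutive classes, so the parity of the class 2-colours these edges, and a
  bipartite graph is a comparability graph: orient every edge away from the even side;
  then no directed path has two arcs.\<close>

lemma comparability_edges_if_bipartite:
  fixes P :: "'a \<Rightarrow> bool"
  assumes "sym F" and two_coloured: "\<And>u v. (u, v) \<in> F \<Longrightarrow> P u \<noteq> P v"
  shows "comparability_edges F"
proof -
  let ?Or = "{(u, v) \<in> F. P u}"
  have "trans ?Or"
    by (rule transI) (use two_coloured in blast)
  moreover have "(u, v) \<in> ?Or \<longleftrightarrow> (v, u) \<notin> ?Or" if "(u, v) \<in> F" for u v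
  proof -
    have "(v, u) \<in> F" using \<open>sym F\<close> that by (rule symD)
    then show ?thesis using that two_coloured by blast
  qed
  ultimately have "transitive_orientation F ?Or"
    unfolding transitive_orientation_def by blast
  then show ?thesis
    unfolding comparability_edges_def ..
qed

lemma comparability_edges_if_cluster:
  assumes "irrefl F" "sym F"
    and cluster: "\<And>x y z. (x, y) \<in> F \<Longrightarrow> (y, z) \<in> F \<Longrightarrow> x \<noteq> z \<Longrightarrow> (x, z) \<in> F"
  shows "comparability_edges F"
proof -
  obtain r :: "'a rel" where "Well_order r" and field: "Field r = UNIV"
    using well_ordering by metis
  then have "Total r" "antisym r" "trans r"
    unfolding well_order_on_def linear_order_on_def partial_order_on_def preorder_on_def
    by blast+
  with field have total: "total r" by simp
  have "trans (F \<inter> r)"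
  proof (rule transI)
    fix x y z assume xy: "(x, y) \<in> F \<inter> r" and yz: "(y, z) \<in> F \<inter> r"
    have "x \<noteq> z"
    proof
      assume "x = z"
      with xy yz \<open>antisym r\<close> have "x = y" by (blast dest: antisymD)
      with xy \<open>irrefl F\<close> show False by (simp add: irrefl_def)
    qed
    with xy yz have "(x, z) \<in> F" by (blast intro: cluster)
    moreover have "(x, z) \<in> r" using xy yz \<open>trans r\<close> by (blast dest: transD)
    ultimately show "(x, z) \<in> F \<inter> r" by simp
  qed
  moreover have "(u, v) \<in> F \<inter> r \<longleftrightarrow> (v, u) \<notin> F \<inter> r" if "(u, v) \<in> F" for u v
  proof -
    have "u \<noteq> v" using that \<open>irrefl F\<close> by (auto simp: irrefl_def)
    then have "(u, v) \<in> r \<longleftrightarrow> (v, u) \<notin> r"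
      using total \<open>antisym r\<close> by (auto simp: total_on_def dest: antisymD)
    moreover have "(v, u) \<in> F" using \<open>sym F\<close> that by (rule symD)
    ultimately show ?thesis using that by simp
  qed
  ultimately have "transitive_orientation F (F \<inter> r)"
    unfolding transitive_orientation_def by simp
  then show ?thesis
    unfolding comparability_edges_def ..
qed

lemma p_number_le_2I:
  assumes "comparability_subgraph V E F\<^sub>0" "comparability_subgraph V E F\<^sub>1"
    and "F\<^sub>0 \<inter> F\<^sub>1 = {}" "F\<^sub>0 \<union> F\<^sub>1 = E"
  shows "p_number V E \<le> 2"
proof -
  let ?F = "\<lambda>i::nat. if i = 0 then F\<^sub>0 else F\<^sub>1"
  have "{..<2::nat} = {0, 1}" by auto
  then have "(\<Union>i<2. ?F i) = F\<^sub>0 \<union> F\<^sub>1" by auto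
  then have "comparability_cover V E 2"
    unfolding comparability_cover_def using assms
    by (intro exI[of _ ?F]) (auto simp: less_2_cases_iff)
  then show ?thesis
    unfolding p_number_def by (rule Least_le)
qed

lemma unit_intervals_intersect_iff:
  fixes x y :: real
  shows "{x .. x + 1} \<inter> {y .. y + 1} \<noteq> {} \<longleftrightarrow> \<bar>x - y\<bar> \<le> 1"
proof
  assume "\<bar>x - y\<bar> \<le> 1"
  then have "max x y \<in> {x .. x + 1} \<inter> {y .. y + 1}" by auto
  then show "{x .. x + 1} \<inter> {y .. y + 1} \<noteq> {}" by blast
qed auto

lemma abs_diff_less_1_if_floor_eq:
  fixes x y :: real
  assumes "\<lfloor>x\<rfloor> = \<lfloor>y\<rfloor>"
  shows "\<bar>x - y\<bar> < 1"
  using assms by linarith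

lemma even_floor_iff_odd_floor:
  fixes x y :: real
  assumes "\<bar>x - y\<bar> \<le> 1" "\<lfloor>x\<rfloor> \<noteq> \<lfloor>y\<rfloor>"
  shows "even \<lfloor>x\<rfloor> \<longleftrightarrow> odd \<lfloor>y\<rfloor>"
proof -
  have "\<lfloor>x\<rfloor> = \<lfloor>y\<rfloor> + 1 \<or> \<lfloor>y\<rfloor> = \<lfloor>x\<rfloor> + 1"
    using assms by linarith
  then show ?thesis by auto
qed

lemma unit_interval_graph_edges:
  assumes "unit_interval_graph V E"
  obtains a :: "'a \<Rightarrow> real"
  where "E = {(u, v). u \<in> V \<and> v \<in> V \<and> u \<noteq> v \<and> \<bar>a u - a v\<bar> \<le> 1}"
  using assms unfolding unit_interval_graph_def unit_intervals_intersect_iff by blast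

context
  fixes V :: "'a set" and E :: "('a \<times> 'a) set" and a :: "'a \<Rightarrow> real"
  assumes edges: "E = {(u, v). u \<in> V \<and> v \<in> V \<and> u \<noteq> v \<and> \<bar>a u - a v\<bar> \<le> 1}"
begin

lemma comparability_subgraph_same_floor:
  "comparability_subgraph V E {(u, v) \<in> E. \<lfloor>a u\<rfloor> = \<lfloor>a v\<rfloor>}"
proof -
  let ?F = "{(u, v) \<in> E. \<lfloor>a u\<rfloor> = \<lfloor>a v\<rfloor>}"
  have "irrefl ?F"
    unfolding edges irrefl_def by simp
  moreover have "sym ?F"
    unfolding edges sym_def by (auto simp: abs_minus_commute)
  moreover have "(x, z) \<in> ?F" if "(x, y) \<in> ?F" "(y, z) \<in> ?F" "x \<noteq> z" for x y z
  proof -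
    have "\<lfloor>a x\<rfloor> = \<lfloor>a z\<rfloor>" using that by simp
    then have "\<bar>a x - a z\<bar> \<le> 1" using abs_diff_less_1_if_floor_eq by fastforce
    with that \<open>\<lfloor>a x\<rfloor> = \<lfloor>a z\<rfloor>\<close> show ?thesis unfolding edges by simp
  qed
  ultimately have "comparability_edges ?F"
    by (rule comparability_edges_if_cluster)
  with \<open>sym ?F\<close> show ?thesis
    unfolding comparability_subgraph_def by auto
qed

lemma comparability_subgraph_distinct_floor:
  "comparability_subgraph V E {(u, v) \<in> E. \<lfloor>a u\<rfloor> \<noteq> \<lfloor>a v\<rfloor>}"
proof -
  let ?F = "{(u, v) \<in> E. \<lfloor>a u\<rfloor> \<noteq> \<lfloor>a v\<rfloor>}"
  have "sym ?F"
    unfolding edges sym_def by (auto simp: abs_minus_commute)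
  moreover have "even \<lfloor>a u\<rfloor> \<noteq> even \<lfloor>a v\<rfloor>" if "(u, v) \<in> ?F" for u v
    using that even_floor_iff_odd_floor unfolding edges by simp
  ultimately have "comparability_edges ?F"
    by (rule comparability_edges_if_bipartite)
  with \<open>sym ?F\<close> show ?thesis
    unfolding comparability_subgraph_def by auto
qed

end

theorem theorem5:
  fixes V :: "'a set" and E :: "('a \<times> 'a) set"
  assumes "unit_interval_graph V E"
  shows "p_number V E \<le> 2"
proof -
  obtain a :: "'a \<Rightarrow> real"
    where edges: "E = {(u, v). u \<in> V \<and> v \<in> V \<and> u \<noteq> v \<and> \<bar>a u - a v\<bar> \<le> 1}"
    using unit_interval_graph_edges[OF assms] .
  show ?thesis
  proof (rule p_number_le_2I)
    show "comparability_subgraph V E {(u, v) \<in> E. \<lfloor>a u\<rfloor> = \<lfloor>a v\<rfloor>}"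
      using edges by (rule comparability_subgraph_same_floor)
    show "comparability_subgraph V E {(u, v) \<in> E. \<lfloor>a u\<rfloor> \<noteq> \<lfloor>a v\<rfloor>}"
      using edges by (rule comparability_subgraph_distinct_floor)
  qed blast+
qed

end
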